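(* Let $(X,\le)$ be a globally hyperbolic poset. Then $X$, equipped with its interval topology, is a locally compact Hausdorff space. Moreover: (i) the Lawson topology of $X$ is contained in the interval topology; (ii) the partial order $\le$ is a closed subset of $X\times X$ (with the product of the interval topologies); (iii) every directed subset of $X$ that has an upper bound has a supremum; (iv) every filtered subset of $X$ that has a lower bound has an infimum.
   Context: For a poset $(P,\sqsubseteq)$: a nonempty $S\subseteq P$ is directed if any two elements of $S$ have an upper bound in $S$, and filtered if any two elements of $S$ have a lower bound in $S$; $\bigsqcup S$ and $\bigwedge S$ denote the supremum and infimum of $S$ when they exist. Write $\uparrow F=\{y:\exists x\in F,\ x\sqsubseteq y\}$. For $x,y\in P$, $x\ll y$ iff for every directed $S\subseteq P$ that has a supremum, $y\sqsubseteq\bigsqcup S$ implies $x\sqsubseteq s$ for some $s\in S$. Put $\Downarrow x=\{a: a\ll x\}$ and $\Uparrow x=\{a: x\ll a\}$. A basis of $P$ is a subset $B$ such that for every $x$, $B\cap\Downarrow x$ contains a directed set with supremum $x$; $P$ is continuous if it has a basis. A continuous poset $P$ is bicontinuous if (1) for all $x,y\in P$: $x\ll y$ iff for every filtered $S\subseteq P$ having an infimum, $\bigwedge S\sqsubseteq x$ implies $s\sqsubseteq y$ for some $s\in S$; and (2) for every $x$, $\Uparrow x$ is filtered with infimum $x$. On a bicontinuous poset the sets $(a,b)=\{x: a\ll x\ll b\}$ form a basis for a topology, called the interval topology. The Lawson topology on a continuous poset $P$ is the topology with basis all sets $\Uparrow x\setminus\uparrow F$ with $x\in P$ and $F\subseteq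 P$ finite. A globally hyperbolic poset is a bicontinuous poset $(X,\le)$ such that every closed interval $[a,b]=\{x: a\le x\le b\}$ is compact in the interval topology. *)

theory Defs
  imports "HOL-Analysis.Analysis"
begin

text \<open>Posets are modelled by a type of class order; the poset X is the whole type.\<close>

definition directed :: "'a::order set \<Rightarrow> bool" where
  "directed S \<longleftrightarrow> S \<noteq> {} \<and> (\<forall>x\<in>S. \<forall>y\<in>S. \<exists>z\<in>S. x \<le> z \<and> y \<le> z)"

definition filtered :: "'a::order set \<Rightarrow> bool" where
  "filtered S \<longleftrightarrow> S \<noteq> {} \<and> (\<forall>x\<in>S. \<forall>y\<in>S. \<exists>z\<in>S. z \<le> x \<and> z \<le> y)"

definition is_sup :: "'a::order set \<Rightarrow> 'a \<Rightarrow> bool" where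
  "is_sup S x \<longleftrightarrow> (\<forall>s\<in>S. s \<le> x) \<and> (\<forall>u. (\<forall>s\<in>S. s \<le> u) \<longrightarrow> x \<le> u)"

definition is_inf :: "'a::order set \<Rightarrow> 'a \<Rightarrow> bool" where
  "is_inf S x \<longleftrightarrow> (\<forall>s\<in>S. x \<le> s) \<and> (\<forall>u. (\<forall>s\<in>S. u \<le> s) \<longrightarrow> u \<le> x)"

definition way_below :: "'a::order \<Rightarrow> 'a \<Rightarrow> bool" (infix "\<lless>" 50) where
  "x \<lless> y \<longleftrightarrow> (\<forall>S. directed S \<longrightarrow> (\<forall>l. is_sup S l \<longrightarrow> y \<le> l \<longrightarrow> (\<exists>s\<in>S. x \<le> s)))"

definition ddown :: "'a::order \<Rightarrow> 'a set" where
  "ddown x = {a. a \<lless> x}"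

definition uup :: "'a::order \<Rightarrow> 'a set" where
  "uup x = {a. x \<lless> a}"

definition upset :: "'a::order set \<Rightarrow> 'a set" where
  "upset F = {y. \<exists>x\<in>F. x \<le> y}"

definition is_basis :: "'a::order set \<Rightarrow> bool" where
  "is_basis B \<longleftrightarrow> (\<forall>x. \<exists>S. S \<subseteq> B \<inter> ddown x \<and> directed S \<and> is_sup S x)"

definition continuous_poset :: "'a::order itself \<Rightarrow> bool" where
  "continuous_poset _ \<longleftrightarrow> (\<exists>B::'a set. is_basis B)"

definition bicontinuous :: "'a::order itself \<Rightarrow> bool" where
  "bicontinuous _ \<longleftrightarrow> continuous_poset TYPE('a)
     \<and> (\<forall>x y::'a. x \<lless> y \<longleftrightarrow>
          (\<forall>S. filtered S \<longrightarrow> (\<forall>m. is_inf S m \<longrightarrow> m \<le> x \<longrightarrow> (\<exists>s\<in>S. s \<le> y))))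
     \<and> (\<forall>x::'a. filtered (uup x) \<and> is_inf (uup x) x)"

definition interval_topology :: "'a::order topology" where
  "interval_topology = topology_generated_by {{x. a \<lless> x \<and> x \<lless> b} | a b. True}"

definition lawson_topology :: "'a::order topology" where
  "lawson_topology = topology_generated_by {uup x - upset F | x F. finite F}"

definition globally_hyperbolic :: "'a::order itself \<Rightarrow> bool" where
  "globally_hyperbolic _ \<longleftrightarrow> bicontinuous TYPE('a)
     \<and> (\<forall>a b::'a. compactin interval_topology {a..b})"

end

theory Submission
  imports Defs
begin

(* The open intervals (a, b) = {x. a << x << b} cover X, and a << u <= v << b forces a <= b.
   Continuity approximates every point from way below and bicontinuity from way above; hence if
   x is not below y there are a << x and y << b with a not below b, and then no element of an
   interval (a, c) around x lies below an element of an interval (d, b) around y.  This gives the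
   Hausdorff property and the closedness of the order.  The same approximations show that the rays
   [s, oo) and (-oo, v] are closed, so the Lawson basis sets uup x - upset F are open.
   For a directed set S bounded by u and some s0 in S, the closed rays [s, oo) with s in S and
   (-oo, v] with v an upper bound of S have the finite intersection property inside the compact
   interval [s0, u]; a common point is the supremum of S.  Infima are dual. *)

lemma way_below_imp_le:
  assumes "(x::'a::order) \<lless> y"
  shows "x \<le> y"
proof -
  have "directed {y}" "is_sup {y} y" by (simp_all add: directed_def is_sup_def)
  then show ?thesis using assms unfolding way_below_def by blast
qed

lemma le_way_below_trans: "(x::'a::order) \<le> y \<Longrightarrow> y \<lless> z \<Longrightarrow> x \<lless> z"
  unfolding way_below_def by (meson order_trans)

lemma way_below_le_way_below_imp_le:
  "(a::'a::order) \<lless> u \<Longrightarrow> u \<le> v \<Longrightarrow> v \<lless> b \<Longrightarrow> a \<le> b"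
  by (meson way_below_imp_le order_trans)

lemma globally_hyperbolic_imp_bicontinuous:
  "globally_hyperbolic TYPE('a::order) \<Longrightarrow> bicontinuous TYPE('a)"
  unfolding globally_hyperbolic_def by (rule conjunct1)

lemma globally_hyperbolic_compactin_atLeastAtMost:
  "globally_hyperbolic TYPE('a::order) \<Longrightarrow> compactin interval_topology {a..b::'a}"
  unfolding globally_hyperbolic_def by blast

lemma bicontinuous_approximating_set:
  assumes "bicontinuous TYPE('a::order)"
  obtains S where "S \<subseteq> ddown (x::'a)" "directed S" "is_sup S x"
proof -
  have "continuous_poset TYPE('a)" using assms unfolding bicontinuous_def by (rule conjunct1)
  then obtain B :: "'a set" where "is_basis B" unfolding continuous_poset_def by (rule exE)
  then show thesis using that unfolding is_basis_def by blast
qed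

lemma bicontinuous_uup:
  assumes "bicontinuous TYPE('a::order)"
  shows "filtered (uup (x::'a))" "is_inf (uup x) x"
  using assms unfolding bicontinuous_def by blast+

lemma exists_way_below:
  assumes "bicontinuous TYPE('a::order)"
  shows "\<exists>a. a \<lless> (y::'a)"
proof -
  obtain S where "S \<subseteq> ddown y" "directed S" by (rule bicontinuous_approximating_set[OF assms])
  then show ?thesis unfolding directed_def ddown_def by blast
qed

lemma exists_way_above:
  assumes "bicontinuous TYPE('a::order)"
  shows "\<exists>b. (y::'a) \<lless> b"
  using bicontinuous_uup[OF assms, of y] unfolding filtered_def uup_def by blast

lemma exists_way_below_not_le:
  assumes "bicontinuous TYPE('a::order)" "\<not> (y::'a) \<le> v"
  shows "\<exists>a. a \<lless> y \<and> \<not> a \<le> v"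
proof -
  obtain S where "S \<subseteq> ddown y" "is_sup S y" by (rule bicontinuous_approximating_set[OF assms(1)])
  then show ?thesis using assms(2) unfolding is_sup_def ddown_def by blast
qed

lemma exists_way_above_not_ge:
  assumes "bicontinuous TYPE('a::order)" "\<not> (s::'a) \<le> y"
  shows "\<exists>b. y \<lless> b \<and> \<not> s \<le> b"
  using bicontinuous_uup(2)[OF assms(1), of y] assms(2)
  unfolding is_inf_def uup_def by blast

lemma way_below_weak_interpolate:
  assumes "bicontinuous TYPE('a::order)" "(x::'a) \<lless> y"
  shows "\<exists>a. x \<le> a \<and> a \<lless> y"
proof -
  obtain S where "S \<subseteq> ddown y" "directed S" "is_sup S y"
    by (rule bicontinuous_approximating_set[OF assms(1)])
  then show ?thesis using assms(2) unfolding way_below_def ddown_def by blast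
qed

definition way_interval :: "'a::order \<Rightarrow> 'a \<Rightarrow> 'a set" where
  "way_interval a b = {x. a \<lless> x \<and> x \<lless> b}"

lemma mem_way_interval [simp]: "x \<in> way_interval a b \<longleftrightarrow> a \<lless> x \<and> x \<lless> b"
  by (simp add: way_interval_def)

lemma openin_way_interval: "openin interval_topology (way_interval a b)"
  unfolding interval_topology_def way_interval_def
  by (rule topology_generated_by_Basis) blast

lemma openin_interval_topologyI:
  assumes "\<And>y. y \<in> U \<Longrightarrow> \<exists>a b. y \<in> way_interval a b \<and> way_interval a b \<subseteq> U"
  shows "openin interval_topology U"
  using assms openin_way_interval by (subst openin_subopen) blast

lemma topspace_interval_topology:
  assumes "bicontinuous TYPE('a::order)"
  shows "topspace (interval_topology :: 'a topology) = UNIV"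
  using exists_way_below[OF assms] exists_way_above[OF assms]
  unfolding interval_topology_def topology_generated_by_topspace by blast

lemma closedin_interval_topology_atLeast:
  assumes "bicontinuous TYPE('a::order)"
  shows "closedin interval_topology {s::'a..}"
  unfolding closedin_def topspace_interval_topology[OF assms]
proof (intro conjI openin_interval_topologyI)
  fix y assume "y \<in> UNIV - {s..}"
  then obtain b where b: "y \<lless> b" "\<not> s \<le> b"
    using exists_way_above_not_ge[OF assms] by auto
  obtain a where "a \<lless> y" using exists_way_below[OF assms] by blast
  moreover have "way_interval a b \<subseteq> UNIV - {s..}"
    using b(2) way_below_imp_le order_trans unfolding way_interval_def by blast
  ultimately show "\<exists>a b. y \<in> way_interval a b \<and> way_interval a b \<subseteq> UNIV - {s..}"
    using b(1) by auto
qed simp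

lemma closedin_interval_topology_atMost:
  assumes "bicontinuous TYPE('a::order)"
  shows "closedin interval_topology {..v::'a}"
  unfolding closedin_def topspace_interval_topology[OF assms]
proof (intro conjI openin_interval_topologyI)
  fix y assume "y \<in> UNIV - {..v}"
  then obtain a where a: "a \<lless> y" "\<not> a \<le> v"
    using exists_way_below_not_le[OF assms] by auto
  obtain b where "y \<lless> b" using exists_way_above[OF assms] by blast
  moreover have "way_interval a b \<subseteq> UNIV - {..v}"
    using a(2) way_below_imp_le order_trans unfolding way_interval_def by blast
  ultimately show "\<exists>a b. y \<in> way_interval a b \<and> way_interval a b \<subseteq> UNIV - {..v}"
    using a(1) by auto
qed simp

lemma openin_interval_topology_uup:
  assumes "bicontinuous TYPE('a::order)"
  shows "openin interval_topology (uup (x::'a))"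
proof (rule openin_interval_topologyI)
  fix y assume "y \<in> uup x"
  then obtain a where a: "x \<le> a" "a \<lless> y"
    using way_below_weak_interpolate[OF assms] by (auto simp: uup_def)
  obtain b where "y \<lless> b" using exists_way_above[OF assms] by blast
  moreover have "way_interval a b \<subseteq> uup x"
    using le_way_below_trans[OF a(1)] by (auto simp: uup_def)
  ultimately show "\<exists>a b. y \<in> way_interval a b \<and> way_interval a b \<subseteq> uup x"
    using a(2) by auto
qed

lemma openin_lawson_imp_openin_interval:
  assumes "bicontinuous TYPE('a::order)" "openin (lawson_topology :: 'a topology) U"
  shows "openin interval_topology U"
proof -
  have basic_open: "openin interval_topology (uup x - upset F)" if "finite F" for x :: 'a and F
  proof -
    have "upset F = \<Union>(atLeast ` F)" by (auto simp: upset_def)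
    then have "closedin interval_topology (upset F)"
      by (metis closedin_Union finite_imageI imageE that closedin_interval_topology_atLeast[OF assms(1)])
    then show ?thesis by (rule openin_diff[OF openin_interval_topology_uup[OF assms(1)]])
  qed
  have "generate_topology_on {uup x - upset F | (x::'a) F. finite F} U"
    using assms(2) unfolding lawson_topology_def openin_topology_generated_by_iff .
  then show ?thesis
    by (rule generate_topology_on_coarsest[OF istopology_openin, rotated]) (use basic_open in blast)
qed

lemma not_le_separated:
  assumes "bicontinuous TYPE('a::order)" "\<not> (x::'a) \<le> y"
  obtains U V where "openin interval_topology U" "openin interval_topology V"
    "x \<in> U" "y \<in> V" "\<And>u v. u \<in> U \<Longrightarrow> v \<in> V \<Longrightarrow> \<not> u \<le> v"
proof -
  obtain a where a: "a \<lless> x" "\<not> a \<le> y" using exists_way_below_not_le[OF assms] by blast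
  obtain b where b: "y \<lless> b" "\<not> a \<le> b" using exists_way_above_not_ge[OF assms(1) a(2)] by blast
  obtain c where "x \<lless> c" using exists_way_above[OF assms(1)] by blast
  moreover obtain d where "d \<lless> y" using exists_way_below[OF assms(1)] by blast
  ultimately show thesis
    using that[OF openin_way_interval[of a c] openin_way_interval[of d b]] a b
      way_below_le_way_below_imp_le by auto
qed

lemma Hausdorff_space_interval_topology:
  assumes "bicontinuous TYPE('a::order)"
  shows "Hausdorff_space (interval_topology :: 'a topology)"
  unfolding Hausdorff_space_def
proof (intro allI impI)
  have separated: "\<exists>U V. openin interval_topology U \<and> openin interval_topology V \<and> x \<in> U \<and> y \<in> V \<and> disjnt U V"
    if not_le: "\<not> x \<le> y" for x y :: 'a
  proof -
    obtain U V where "openin interval_topology U" "openin interval_topology V"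
      "x \<in> U" "y \<in> V" "\<And>u v. u \<in> U \<Longrightarrow> v \<in> V \<Longrightarrow> \<not> u \<le> v"
      using not_le_separated[OF assms not_le] by blast
    then show ?thesis unfolding disjnt_iff by blast
  qed
  fix x y :: 'a assume "x \<in> topspace interval_topology \<and> y \<in> topspace interval_topology \<and> x \<noteq> y"
  then consider "\<not> x \<le> y" | "\<not> y \<le> x" by (metis order.antisym)
  then show "\<exists>U V. openin interval_topology U \<and> openin interval_topology V \<and> x \<in> U \<and> y \<in> V \<and> disjnt U V"
  proof cases
    case 1
    then show ?thesis by (rule separated)
  next
    case 2
    then obtain U V where "openin interval_topology U" "openin interval_topology V"
      "y \<in> U" "x \<in> V" "disjnt U V"
      using separated by blast
    then show ?thesis by (intro exI[of _ V] exI[of _ U]) (simp add: disjnt_sym)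
  qed
qed

lemma closedin_le_relation:
  assumes "bicontinuous TYPE('a::order)"
  shows "closedin (prod_topology (interval_topology :: 'a topology) interval_topology) {(x, y). x \<le> y}"
  unfolding closedin_def topspace_prod_topology topspace_interval_topology[OF assms]
proof (intro conjI)
  let ?X = "prod_topology (interval_topology :: 'a topology) interval_topology"
  show "openin ?X (UNIV \<times> UNIV - {(x, y). x \<le> y})"
  proof (subst openin_subopen, intro ballI)
    fix p assume "p \<in> UNIV \<times> UNIV - {(x::'a, y). x \<le> y}"
    then obtain x y where p: "p = (x, y)" "\<not> x \<le> y" by auto
    then obtain U V where UV: "openin interval_topology U" "openin interval_topology V"
      "x \<in> U" "y \<in> V" "\<And>u v. u \<in> U \<Longrightarrow> v \<in> V \<Longrightarrow> \<not> u \<le> v"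
      using not_le_separated[OF assms] by blast
    then have "openin ?X (U \<times> V)" by (simp add: openin_prod_Times_iff)
    moreover have "U \<times> V \<subseteq> UNIV \<times> UNIV - {(x, y). x \<le> y}" using UV(5) by auto
    ultimately show "\<exists>T. openin ?X T \<and> p \<in> T \<and> T \<subseteq> UNIV \<times> UNIV - {(x, y). x \<le> y}"
      using p UV(3,4) by blast
  qed
qed auto

lemma locally_compact_space_interval_topology:
  assumes "globally_hyperbolic TYPE('a::order)"
  shows "locally_compact_space (interval_topology :: 'a topology)"
  unfolding locally_compact_space_def
proof
  fix x :: 'a
  have bc: "bicontinuous TYPE('a)" using assms by (rule globally_hyperbolic_imp_bicontinuous)
  obtain a b where "a \<lless> x" "x \<lless> b"
    using exists_way_below[OF bc] exists_way_above[OF bc] by blast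
  moreover have "compactin interval_topology {a..b}"
    using assms by (rule globally_hyperbolic_compactin_atLeastAtMost)
  moreover have "way_interval a b \<subseteq> {a..b}" using way_below_imp_le by auto
  ultimately show "\<exists>U K. openin interval_topology U \<and> compactin interval_topology K \<and> x \<in> U \<and> U \<subseteq> K"
    by (intro exI[of _ "way_interval a b"] exI[of _ "{a..b}"]) (simp add: openin_way_interval)
qed

lemma directed_finite_upper_bound:
  assumes "directed S" "finite F" "F \<subseteq> S"
  shows "\<exists>t\<in>S. \<forall>f\<in>F. f \<le> (t::'a::order)"
  using assms(2,3)
proof (induction F rule: finite_induct)
  case empty
  then show ?case using assms(1) unfolding directed_def by auto
next
  case (insert a F)
  then obtain t where "t \<in> S" "\<forall>f\<in>F. f \<le> t" by blast
  moreover obtain z where "z \<in> S" "a \<le> z" "t \<le> z"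
    using assms(1) \<open>t \<in> S\<close> insert.prems unfolding directed_def by blast
  ultimately show ?case by (blast intro: order_trans)
qed

lemma filtered_finite_lower_bound:
  assumes "filtered S" "finite F" "F \<subseteq> S"
  shows "\<exists>t\<in>S. \<forall>f\<in>F. (t::'a::order) \<le> f"
  using assms(2,3)
proof (induction F rule: finite_induct)
  case empty
  then show ?case using assms(1) unfolding filtered_def by auto
next
  case (insert a F)
  then obtain t where "t \<in> S" "\<forall>f\<in>F. t \<le> f" by blast
  moreover obtain z where "z \<in> S" "z \<le> a" "z \<le> t"
    using assms(1) \<open>t \<in> S\<close> insert.prems unfolding filtered_def by blast
  ultimately show ?case by (blast intro: order_trans)
qed

lemma compactin_interpolant:
  fixes X :: "'a::order topology"
  assumes "compactin X K"
    and "\<And>a. closedin X {a..}" "\<And>b. closedin X {..b}"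
    and finite_interpolant: "\<And>A' B'. finite A' \<Longrightarrow> A' \<subseteq> A \<Longrightarrow> finite B' \<Longrightarrow> B' \<subseteq> B \<Longrightarrow>
      \<exists>t\<in>K. (\<forall>a\<in>A'. a \<le> t) \<and> (\<forall>b\<in>B'. t \<le> b)"
  obtains x where "\<forall>a\<in>A. a \<le> x" "\<forall>b\<in>B. x \<le> b"
proof -
  let ?\<U> = "atLeast ` A \<union> atMost ` B"
  have closed: "\<forall>C\<in>?\<U>. closedin X C" using assms(2,3) by blast
  have fip: "\<forall>\<F>. finite \<F> \<and> \<F> \<subseteq> ?\<U> \<longrightarrow> K \<inter> \<Inter>\<F> \<noteq> {}"
  proof (intro allI impI, elim conjE)
    fix \<F> assume fin: "finite \<F>" and sub: "\<F> \<subseteq> ?\<U>"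
    obtain A' where A': "A' \<subseteq> A" "finite A'" "\<F> \<inter> atLeast ` A = atLeast ` A'"
      using finite_subset_image[OF finite_Int[OF disjI1, OF fin] Int_lower2] by metis
    obtain B' where B': "B' \<subseteq> B" "finite B'" "\<F> \<inter> atMost ` B = atMost ` B'"
      using finite_subset_image[OF finite_Int[OF disjI1, OF fin] Int_lower2] by metis
    have "\<F> = (\<F> \<inter> atLeast ` A) \<union> (\<F> \<inter> atMost ` B)" using sub by blast
    also have "\<dots> = atLeast ` A' \<union> atMost ` B'" using A'(3) B'(3) by simp
    moreover obtain t where "t \<in> K" "\<forall>a\<in>A'. a \<le> t" "\<forall>b\<in>B'. t \<le> b"
      using finite_interpolant[OF A'(2,1) B'(2,1)] by blast
    ultimately show "K \<inter> \<Inter>\<F> \<noteq> {}" by auto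
  qed
  have "\<forall>\<U>. (\<forall>C\<in>\<U>. closedin X C) \<and> (\<forall>\<F>. finite \<F> \<and> \<F> \<subseteq> \<U> \<longrightarrow> K \<inter> \<Inter>\<F> \<noteq> {})
      \<longrightarrow> K \<inter> \<Inter>\<U> \<noteq> {}"
    using assms(1) unfolding compactin_fip by (rule conjunct2)
  then have "K \<inter> \<Inter>?\<U> \<noteq> {}" using closed fip by blast
  then show thesis using that by auto
qed

lemma bounded_directed_has_sup:
  assumes "globally_hyperbolic TYPE('a::order)" "directed (S::'a set)" "\<forall>s\<in>S. s \<le> u"
  shows "\<exists>l. is_sup S l"
proof -
  have bc: "bicontinuous TYPE('a)" using assms(1) by (rule globally_hyperbolic_imp_bicontinuous)
  obtain s0 where "s0 \<in> S" using assms(2) unfolding directed_def by blast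
  obtain x where "\<forall>s\<in>S. s \<le> x" "\<forall>v\<in>{v. \<forall>s\<in>S. s \<le> v}. x \<le> v"
  proof (rule compactin_interpolant[of interval_topology "{s0..u}"])
    show "compactin interval_topology {s0..u}"
      using assms(1) by (rule globally_hyperbolic_compactin_atLeastAtMost)
    fix A' B' assume "finite A'" "A' \<subseteq> S" "B' \<subseteq> {v. \<forall>s\<in>S. s \<le> v}"
    then obtain t where "t \<in> S" "\<forall>a\<in>insert s0 A'. a \<le> t"
      using directed_finite_upper_bound[OF assms(2), of "insert s0 A'"] \<open>s0 \<in> S\<close> by auto
    then show "\<exists>t\<in>{s0..u}. (\<forall>a\<in>A'. a \<le> t) \<and> (\<forall>b\<in>B'. t \<le> b)"
      using assms(3) \<open>B' \<subseteq> _\<close> by (intro bexI[of _ t]) auto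
  qed (use closedin_interval_topology_atLeast[OF bc] closedin_interval_topology_atMost[OF bc] in auto)
  then show ?thesis unfolding is_sup_def by blast
qed

lemma bounded_filtered_has_inf:
  assumes "globally_hyperbolic TYPE('a::order)" "filtered (S::'a set)" "\<forall>s\<in>S. u \<le> s"
  shows "\<exists>l. is_inf S l"
proof -
  have bc: "bicontinuous TYPE('a)" using assms(1) by (rule globally_hyperbolic_imp_bicontinuous)
  obtain s0 where "s0 \<in> S" using assms(2) unfolding filtered_def by blast
  obtain x where "\<forall>v\<in>{v. \<forall>s\<in>S. v \<le> s}. v \<le> x" "\<forall>s\<in>S. x \<le> s"
  proof (rule compactin_interpolant[of interval_topology "{u..s0}"])
    show "compactin interval_topology {u..s0}"
      using assms(1) by (rule globally_hyperbolic_compactin_atLeastAtMost)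
    fix A' B' assume "A' \<subseteq> {v. \<forall>s\<in>S. v \<le> s}" "finite B'" "B' \<subseteq> S"
    then obtain t where "t \<in> S" "\<forall>b\<in>insert s0 B'. t \<le> b"
      using filtered_finite_lower_bound[OF assms(2), of "insert s0 B'"] \<open>s0 \<in> S\<close> by auto
    then show "\<exists>t\<in>{u..s0}. (\<forall>a\<in>A'. a \<le> t) \<and> (\<forall>b\<in>B'. t \<le> b)"
      using assms(3) \<open>A' \<subseteq> _\<close> by (intro bexI[of _ t]) auto
  qed (use closedin_interval_topology_atLeast[OF bc] closedin_interval_topology_atMost[OF bc] in auto)
  then show ?thesis unfolding is_inf_def by blast
qed

theorem mainTheorem1:
  assumes "globally_hyperbolic TYPE('a::order)"
  shows "locally_compact_space (interval_topology :: 'a topology)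
    \<and> Hausdorff_space (interval_topology :: 'a topology)
    \<and> (\<forall>U. openin (lawson_topology :: 'a topology) U \<longrightarrow> openin interval_topology U)
    \<and> closedin (prod_topology (interval_topology :: 'a topology) interval_topology) {(x, y). x \<le> y}
    \<and> (\<forall>S::'a set. directed S \<and> (\<exists>u. \<forall>s\<in>S. s \<le> u) \<longrightarrow> (\<exists>l. is_sup S l))
    \<and> (\<forall>S::'a set. filtered S \<and> (\<exists>u. \<forall>s\<in>S. u \<le> s) \<longrightarrow> (\<exists>l. is_inf S l))"
proof -
  have bc: "bicontinuous TYPE('a)" using assms by (rule globally_hyperbolic_imp_bicontinuous)
  show ?thesis
    using locally_compact_space_interval_topology[OF assms]
      Hausdorff_space_interval_topology[OF bc] openin_lawson_imp_openin_interval[OF bc]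
      closedin_le_relation[OF bc] bounded_directed_has_sup[OF assms]
      bounded_filtered_has_inf[OF assms]
    by blast
qed

end
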